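(* Let $I\subseteq\mathbb{R}$ be an interval and $f:I\to\mathbb{R}$ a function. Let $a,b,c\in I$ be such that $\frac{a+b}{2}$, $\frac{a+c}{2}$ and $\frac{b+c}{2}$ are points of convexity of $f$ relative to the entire interval $I$. Then $$\frac{f(a)+f(b)+f(c)}{3}+f\left(\frac{a+b+c}{3}\right)\ge\frac{2}{3}\left[f\left(\frac{a+b}{2}\right)+f\left(\frac{a+c}{2}\right)+f\left(\frac{b+c}{2}\right)\right].$$
   Context: A point $p\in I$ is a point of convexity of $f$ relative to $I$ if $f(p)\le\sum_{k=1}^n\lambda_k f(x_k)$ for every finite family of points $x_1,\dots,x_n\in I$ and positive weights $\lambda_1,\dots,\lambda_n$ with $\sum_k\lambda_k=1$ and $\sum_k\lambda_k x_k=p$. *)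

theory Defs
  imports "HOL-Analysis.Analysis"
begin

definition point_of_convexity :: "(real \<Rightarrow> real) \<Rightarrow> real set \<Rightarrow> real \<Rightarrow> bool" where
  "point_of_convexity f I p \<longleftrightarrow> p \<in> I \<and>
     (\<forall>(n::nat) (x::nat \<Rightarrow> real) (lam::nat \<Rightarrow> real).
        (\<forall>k<n. x k \<in> I \<and> lam k > 0) \<and> (\<Sum>k<n. lam k) = 1 \<and> (\<Sum>k<n. lam k * x k) = p
        \<longrightarrow> f p \<le> (\<Sum>k<n. lam k * f (x k)))"

end

theory Submission
  imports Defs
begin

text \<open>Sort \<open>a \<le> b \<le> c\<close> and let \<open>s = (a + b + c) / 3\<close>. If \<open>b \<le> s\<close>, the midpoints
  \<open>(a + c) / 2\<close> and \<open>(b + c) / 2\<close> lie in \<open>[s, c]\<close> at total distance \<open>(c - s) / 2\<close> from \<open>s\<close>;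
  writing each as a convex combination of \<open>s\<close> and \<open>c\<close>, the weights on \<open>c\<close> add up to \<open>1/2\<close>, so
  their values sum to at most \<open>f c / 2 + 3/2 f s\<close>. Adding \<open>f ((a + b) / 2) \<le> (f a + f b) / 2\<close>
  gives the inequality. The case \<open>s \<le> b\<close> is the mirror image with \<open>a\<close> in place of \<open>c\<close>.\<close>

lemma point_of_convexity_two_points:
  assumes "point_of_convexity f I p" "u \<in> I" "v \<in> I" "0 \<le> t" "t \<le> 1"
    and "p = (1 - t) * u + t * v"
  shows "f p \<le> (1 - t) * f u + t * f v"
proof -
  consider "t = 0" | "t = 1" | "0 < t" "t < 1" using assms by linarith
  then show ?thesis
  proof cases
    case 3
    define x :: "nat \<Rightarrow> real" where "x k = (if k = 0 then u else v)" for k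
    define lam :: "nat \<Rightarrow> real" where "lam k = (if k = 0 then 1 - t else t)" for k
    have sum2: "(\<Sum>k<2. g k) = g 0 + g 1" for g :: "nat \<Rightarrow> real"
      by (simp add: numeral_2_eq_2)
    have "\<forall>k<2. x k \<in> I \<and> lam k > 0"
      using 3 assms by (auto simp: x_def lam_def less_2_cases_iff)
    moreover have "(\<Sum>k<2. lam k) = 1" "(\<Sum>k<2. lam k * x k) = p"
      using assms(6) by (simp_all add: sum2 x_def lam_def)
    ultimately have "f p \<le> (\<Sum>k<2. lam k * f (x k))"
      using assms(1) unfolding point_of_convexity_def by blast
    then show ?thesis by (simp add: sum2 x_def lam_def)
  qed (use assms in simp_all)
qed

lemma point_of_convexity_midpoint:
  assumes "point_of_convexity f I ((u + v) / 2)" "u \<in> I" "v \<in> I"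
  shows "f ((u + v) / 2) \<le> (f u + f v) / 2"
  using point_of_convexity_two_points[OF assms, of "1/2"] by (simp add: field_simps)

lemma point_of_convexity_segment:
  assumes "point_of_convexity f I x" "s \<in> I" "e \<in> I" "x \<in> closed_segment s e"
  obtains t where "0 \<le> t" "t \<le> 1" "\<bar>x - s\<bar> = t * \<bar>e - s\<bar>"
    and "f x \<le> (1 - t) * f s + t * f e"
proof -
  obtain t where t: "0 \<le> t" "t \<le> 1" "x = (1 - t) * s + t * e"
    using assms(4) by (auto simp: in_segment)
  have "x - s = t * (e - s)"
    using t(3) by (simp add: algebra_simps)
  then have "\<bar>x - s\<bar> = t * \<bar>e - s\<bar>"
    by (simp add: abs_mult t(1))
  with t point_of_convexity_two_points[OF assms(1-3) t] show thesis
    using that by blast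
qed

lemma point_of_convexity_pair_bound:
  assumes "point_of_convexity f I x" "point_of_convexity f I y" "s \<in> I" "e \<in> I"
    and "x \<in> closed_segment s e" "y \<in> closed_segment s e"
    and "\<bar>x - s\<bar> + \<bar>y - s\<bar> = \<bar>e - s\<bar> / 2"
  shows "f x + f y \<le> f e / 2 + 3 / 2 * f s"
proof (cases "e = s")
  case True
  then show ?thesis using assms(5-6) by simp
next
  case False
  obtain t where t: "\<bar>x - s\<bar> = t * \<bar>e - s\<bar>" "f x \<le> (1 - t) * f s + t * f e"
    using point_of_convexity_segment[OF assms(1,3,4,5)] by blast
  obtain r where r: "\<bar>y - s\<bar> = r * \<bar>e - s\<bar>" "f y \<le> (1 - r) * f s + r * f e"
    using point_of_convexity_segment[OF assms(2,3,4,6)] by blast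
  have "(t + r) * \<bar>e - s\<bar> = (1 / 2) * \<bar>e - s\<bar>"
    using assms(7) t(1) r(1) by (simp add: algebra_simps)
  then have "t + r = 1 / 2" using False by simp
  have "(1 - t) * f s + t * f e + ((1 - r) * f s + r * f e) = (2 - (t + r)) * f s + (t + r) * f e"
    by (simp add: algebra_simps)
  also have "\<dots> = f e / 2 + 3 / 2 * f s"
    unfolding \<open>t + r = 1 / 2\<close> by simp
  finally show ?thesis using t(2) r(2) by linarith
qed

lemma popoviciu_sorted:
  fixes f :: "real \<Rightarrow> real"
  assumes I: "is_interval I" and "a \<in> I" "b \<in> I" "c \<in> I" and "a \<le> b" "b \<le> c"
    and ab: "point_of_convexity f I ((a + b) / 2)"
    and ac: "point_of_convexity f I ((a + c) / 2)"
    and bc: "point_of_convexity f I ((b + c) / 2)"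
  shows "(f a + f b + f c) / 3 + f ((a + b + c) / 3)
           \<ge> 2 / 3 * (f ((a + b) / 2) + f ((a + c) / 2) + f ((b + c) / 2))"
proof -
  define s where "s = (a + b + c) / 3"
  have "s \<in> I"
    using mem_is_interval_1_I[OF I \<open>a \<in> I\<close> \<open>c \<in> I\<close>] \<open>a \<le> b\<close> \<open>b \<le> c\<close> by (simp add: s_def)
  show ?thesis
  proof (cases "b \<le> s")
    case True
    have "f ((a + c) / 2) + f ((b + c) / 2) \<le> f c / 2 + 3 / 2 * f s"
      by (rule point_of_convexity_pair_bound[OF ac bc \<open>s \<in> I\<close> \<open>c \<in> I\<close>])
        (use True \<open>a \<le> b\<close> \<open>b \<le> c\<close> in \<open>auto simp: s_def closed_segment_eq_real_ivl field_simps\<close>)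
    moreover have "f ((a + b) / 2) \<le> (f a + f b) / 2"
      using point_of_convexity_midpoint[OF ab \<open>a \<in> I\<close> \<open>b \<in> I\<close>] .
    ultimately show ?thesis unfolding s_def by argo
  next
    case False
    have "f ((a + b) / 2) + f ((a + c) / 2) \<le> f a / 2 + 3 / 2 * f s"
      by (rule point_of_convexity_pair_bound[OF ab ac \<open>s \<in> I\<close> \<open>a \<in> I\<close>])
        (use False \<open>a \<le> b\<close> \<open>b \<le> c\<close> in \<open>auto simp: s_def closed_segment_eq_real_ivl field_simps\<close>)
    moreover have "f ((b + c) / 2) \<le> (f b + f c) / 2"
      using point_of_convexity_midpoint[OF bc \<open>b \<in> I\<close> \<open>c \<in> I\<close>] .
    ultimately show ?thesis unfolding s_def by argo
  qed
qed

theorem theorem3: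
  fixes I :: "real set" and f :: "real \<Rightarrow> real" and a b c :: real
  assumes "is_interval I"
    and "a \<in> I" and "b \<in> I" and "c \<in> I"
    and "point_of_convexity f I ((a + b) / 2)"
    and "point_of_convexity f I ((a + c) / 2)"
    and "point_of_convexity f I ((b + c) / 2)"
  shows "(f a + f b + f c) / 3 + f ((a + b + c) / 3)
           \<ge> 2 / 3 * (f ((a + b) / 2) + f ((a + c) / 2) + f ((b + c) / 2))"
proof -
  consider "a \<le> b" "b \<le> c" | "a \<le> c" "c \<le> b" | "b \<le> a" "a \<le> c"
    | "b \<le> c" "c \<le> a" | "c \<le> a" "a \<le> b" | "c \<le> b" "b \<le> a" by linarith
  then show ?thesis
  proof cases
    case 1 then show ?thesis using popoviciu_sorted[of I a b c f] assms by simp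
  next
    case 2 then show ?thesis using popoviciu_sorted[of I a c b f] assms by (simp add: ac_simps)
  next
    case 3 then show ?thesis using popoviciu_sorted[of I b a c f] assms by (simp add: ac_simps)
  next
    case 4 then show ?thesis using popoviciu_sorted[of I b c a f] assms by (simp add: ac_simps)
  next
    case 5 then show ?thesis using popoviciu_sorted[of I c a b f] assms by (simp add: ac_simps)
  next
    case 6 then show ?thesis using popoviciu_sorted[of I c b a f] assms by (simp add: ac_simps)
  qed
qed

end
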